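(* Let $P$ be a finite poset and let $E,F,E',F'$ be order filters of $P$. The following are equivalent: (1) $\mathcal{F}(E,F)=\mathcal{F}(E',F')$; (2) $\chi_{E'}$ and $\chi_{F'}$ are a pair of opposite (antipodal) vertices of the cube $\mathcal{F}(E,F)$; (3) $\chi_E+\chi_F=\chi_{E'}+\chi_{F'}$; (4) $E\cap F=E'\cap F'$ and $E\cup F=E'\cup F'$. In particular $\mathcal{F}(E,F)=\mathcal{F}(E\cap F,E\cup F)$, which is combinatorially a cube.
   Context: For a finite poset $P$, an order filter is a subset $F\subseteq P$ such that $a\in F$ and $a<_P b$ imply $b\in F$; $\chi_S\in\{0,1\}^P$ denotes the characteristic vector of $S\subseteq P$. The order polytope of $P$ is $\mathcal{O}(P)=\{x\in[0,1]^P: x_a\le x_b \text{ for all } a<_P b\}=\mathrm{conv}\{\chi_F: F \text{ an order filter}\}$. For order filters $E,F$, $\mathcal{F}(E,F)$ denotes the minimal face of $\mathcal{O}(P)$ containing $\chi_E$ and $\chi_F$. For comparable filters $E\subseteq F$ it is known that $\mathcal{F}(E,F)=\chi_E+\sum_{i=1}^d[0,\chi_{P'_i}]$ where $P'_1,\dots,P'_d$ are the connected components of $P|_{F\setminus E}$, a $d$-dimensional cube; two vertices of a cube are opposite if no proper face of the cube contains both. *)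

theory Defs
  imports "HOL-Analysis.Analysis"
begin

text \<open>The finite poset P is the finite type 'a with its partial order; the space
  R^P is real ^ 'a.\<close>

definition order_filter :: "('a::{finite,order}) set \<Rightarrow> bool" where
  "order_filter F \<longleftrightarrow> (\<forall>a b. a \<in> F \<and> a < b \<longrightarrow> b \<in> F)"

definition chi :: "('a::finite) set \<Rightarrow> real ^ 'a" where
  "chi S = (\<chi> i. if i \<in> S then 1 else 0)"

definition order_polytope :: "(real ^ ('a::{finite,order})) set" where
  "order_polytope = {x. (\<forall>i. 0 \<le> x $ i \<and> x $ i \<le> 1) \<and> (\<forall>a b. a < b \<longrightarrow> x $ a \<le> x $ b)}"

definition min_face :: "('a::{finite,order}) set \<Rightarrow> ('a::{finite,order}) set \<Rightarrow> (real ^ ('a::{finite,order})) set" where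
  "min_face E F = \<Inter>{f. f face_of (order_polytope :: (real ^ ('a::{finite,order})) set) \<and> chi E \<in> f \<and> chi F \<in> f}"

definition opposite_vertices :: "(real ^ 'n) set \<Rightarrow> real ^ 'n \<Rightarrow> real ^ 'n \<Rightarrow> bool" where
  "opposite_vertices C u v \<longleftrightarrow> u extreme_point_of C \<and> v extreme_point_of C \<and>
     (\<forall>f. f face_of C \<and> f \<noteq> C \<longrightarrow> \<not> (u \<in> f \<and> v \<in> f))"

end

theory Submission
  imports Defs
begin

text \<open>Let \<open>I = E \<inter> F\<close> and \<open>U = E \<union> F\<close>. The points of the order polytope that are \<open>1\<close> on \<open>I\<close>,
  \<open>0\<close> off \<open>U\<close> and constant along comparable pairs in \<open>U - I\<close> form a face containing
  \<open>\<chi>\<^sub>E\<close> and \<open>\<chi>\<^sub>F\<close>. It is the smallest such face: the reflection \<open>x \<mapsto> \<chi>\<^sub>E + \<chi>\<^sub>F - x\<close> maps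
  it into the polytope, so every point of it is an endpoint of a segment whose midpoint is
  the midpoint of \<open>\<chi>\<^sub>E\<close> and \<open>\<chi>\<^sub>F\<close>. Hence the minimal face depends only on \<open>I\<close> and \<open>U\<close>, i.e. on
  \<open>\<chi>\<^sub>E + \<chi>\<^sub>F\<close>, and it is the cube parametrized by the values on the connected components of
  \<open>U - I\<close>. Two vertices of it are opposite iff no smaller face contains them, i.e. iff they span
  the same minimal face.\<close>

lemma chi_component [simp]: "chi S $ i = (if i \<in> S then 1 else 0)"
  by (simp add: chi_def)

lemma order_filter_Int: "order_filter E \<Longrightarrow> order_filter F \<Longrightarrow> order_filter (E \<inter> F)"
  and order_filter_Un: "order_filter E \<Longrightarrow> order_filter F \<Longrightarrow> order_filter (E \<union> F)"
  by (auto simp: order_filter_def)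

lemma chi_in_order_polytope: "order_filter E \<Longrightarrow> chi E \<in> order_polytope"
  by (auto simp: order_polytope_def order_filter_def)

lemma convex_order_polytope: "convex order_polytope"
  unfolding convex_def order_polytope_def
  by (auto intro!: convex_bound_le add_mono mult_left_mono)

lemma face_of_tight_inequalities:
  fixes S :: "'v::real_inner set"
  assumes "convex S" and "\<And>k x. k \<in> K \<Longrightarrow> x \<in> S \<Longrightarrow> g k \<bullet> x \<le> c k"
  shows "{x \<in> S. \<forall>k\<in>K. g k \<bullet> x = c k} face_of S"
proof -
  have "{x \<in> S. \<forall>k\<in>K. g k \<bullet> x = c k} = \<Inter> (insert S ((\<lambda>k. S \<inter> {x. g k \<bullet> x = c k}) ` K))"
    by auto
  also have "\<dots> face_of S"
    using assms by (intro face_of_Inter) (auto intro: face_of_refl face_of_Int_supporting_hyperplane_le)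
  finally show ?thesis .
qed

text \<open>For comparable filters \<open>I \<subseteq> U\<close> this is the face \<open>\<chi>\<^sub>I + \<Sum>\<^sub>i [0, \<chi>\<^bsub>P'\<^sub>i\<^esub>]\<close> of the paper.\<close>
definition order_face ::
    "('a::{finite,order}) set \<Rightarrow> ('a::{finite,order}) set \<Rightarrow> (real ^ ('a::{finite,order})) set" where
  "order_face I U = {x \<in> order_polytope. (\<forall>i\<in>I. x $ i = 1) \<and> (\<forall>i. i \<notin> U \<longrightarrow> x $ i = 0) \<and>
     (\<forall>a\<in>U - I. \<forall>b\<in>U - I. a < b \<longrightarrow> x $ a = x $ b)}"

lemma order_face_face_of: "order_face I U face_of order_polytope"
proof -
  let ?face = "\<lambda>K g c. {x \<in> order_polytope. \<forall>k\<in>K. g k \<bullet> x = c k}"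
  have "order_face I U = ?face I (\<lambda>i. axis i 1) (\<lambda>_. 1) \<inter> ?face (- U) (\<lambda>i. - axis i 1) (\<lambda>_. 0) \<inter>
      ?face {(a, b). a \<in> U - I \<and> b \<in> U - I \<and> a < b} (\<lambda>(a, b). axis a 1 - axis b 1) (\<lambda>_. 0)"
    by (auto simp: order_face_def inner_axis' inner_diff_left)
  also have "\<dots> face_of order_polytope"
    by (intro face_of_Int face_of_tight_inequalities[OF convex_order_polytope])
      (auto simp: order_polytope_def inner_axis' inner_diff_left)
  finally show ?thesis .
qed

lemma chi_in_order_face:
  assumes "order_filter E" "order_filter F"
  shows "chi E \<in> order_face (E \<inter> F) (E \<union> F)"
  using assms chi_in_order_polytope[OF assms(1)] by (auto simp: order_face_def order_filter_def)

lemma reflection_in_order_polytope: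
  assumes fE: "order_filter E" and fF: "order_filter F" and x: "x \<in> order_face (E \<inter> F) (E \<union> F)"
  shows "chi E + chi F - x \<in> order_polytope"
proof -
  let ?w = "chi E + chi F - x"
  have bounds: "0 \<le> x $ i \<and> x $ i \<le> 1"
    and on_Int: "i \<in> E \<inter> F \<Longrightarrow> x $ i = 1" and off_Un: "i \<notin> E \<union> F \<Longrightarrow> x $ i = 0"
    and const: "a < b \<Longrightarrow> a \<in> (E \<union> F) - (E \<inter> F) \<Longrightarrow> b \<in> (E \<union> F) - (E \<inter> F) \<Longrightarrow> x $ a = x $ b"
    for i a b using x by (auto simp: order_face_def order_polytope_def)
  have w_bounds: "0 \<le> ?w $ i \<and> ?w $ i \<le> 1" for i
    using bounds[of i] on_Int[of i] off_Un[of i] by auto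
  have "?w $ a \<le> ?w $ b" if "a < b" for a b
  proof -
    have up: "a \<in> E \<Longrightarrow> b \<in> E" "a \<in> F \<Longrightarrow> b \<in> F"
      using fE fF \<open>a < b\<close> by (auto simp: order_filter_def)
    consider "a \<notin> E \<union> F" | "b \<in> E \<inter> F" | "a \<in> (E \<union> F) - (E \<inter> F)" "b \<in> (E \<union> F) - (E \<inter> F)"
      using up by blast
    then show ?thesis
    proof cases
      case 1 then show ?thesis using off_Un[of a] w_bounds[of b] by simp
    next
      case 2 then show ?thesis using on_Int[of b] w_bounds[of a] by simp
    next
      case 3 then show ?thesis using const[OF \<open>a < b\<close>] up by auto
    qed
  qed
  then show ?thesis using w_bounds by (auto simp: order_polytope_def)
qed

lemma face_of_midpoint:
  assumes "T face_of S" "x \<in> S" "y \<in> S" "midpoint x y \<in> T"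
  shows "x \<in> T"
  using assms face_ofD[of T S "midpoint x y" x y] by (cases "x = y") auto

lemma order_face_subset_face:
  assumes fE: "order_filter E" and fF: "order_filter F" and f: "f face_of order_polytope"
    and "chi E \<in> f" "chi F \<in> f"
  shows "order_face (E \<inter> F) (E \<union> F) \<subseteq> f"
proof
  fix x assume x: "x \<in> order_face (E \<inter> F) (E \<union> F)"
  have "midpoint (chi E) (chi F) \<in> f"
    using assms convexD[OF face_of_imp_convex[OF f], of "chi E" "chi F" "1/2" "1/2"]
    by (simp add: midpoint_def scaleR_add_right)
  moreover have "midpoint x (chi E + chi F - x) = midpoint (chi E) (chi F)"
    by (simp add: midpoint_def)
  moreover have "x \<in> order_polytope" using x by (simp add: order_face_def)
  ultimately show "x \<in> f"
    using face_of_midpoint[OF f] reflection_in_order_polytope[OF fE fF x] by metis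
qed

lemma min_face_eq_order_face:
  assumes "order_filter E" "order_filter F"
  shows "min_face E F = order_face (E \<inter> F) (E \<union> F)"
proof
  have "chi F \<in> order_face (E \<inter> F) (E \<union> F)"
    using chi_in_order_face[OF assms(2,1)] by (simp add: Int_commute Un_commute)
  then show "min_face E F \<subseteq> order_face (E \<inter> F) (E \<union> F)"
    unfolding min_face_def using order_face_face_of chi_in_order_face[OF assms] by blast
  show "order_face (E \<inter> F) (E \<union> F) \<subseteq> min_face E F"
    unfolding min_face_def using order_face_subset_face[OF assms] by blast
qed

definition comparability_connected :: "('a::order) set \<Rightarrow> 'a rel" where
  "comparability_connected D = {(a, b). a \<in> D \<and> b \<in> D \<and> (a < b \<or> b < a)}\<^sup>* \<inter> D \<times> D"

lemma equiv_comparability_connected: "equiv D (comparability_connected D)"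
proof -
  let ?r = "{(a, b). a \<in> D \<and> b \<in> D \<and> (a < b \<or> b < a)}"
  have "sym (?r\<^sup>*)"
    by (rule sym_rtrancl) (auto simp: sym_def)
  then have "sym (?r\<^sup>* \<inter> D \<times> D)"
    unfolding sym_def by blast
  moreover have "trans (?r\<^sup>* \<inter> D \<times> D)"
    unfolding trans_def by (blast intro: rtrancl_trans)
  ultimately show ?thesis
    unfolding comparability_connected_def equiv_def refl_on_def by blast
qed

lemma comparability_connected_imp_eq:
  assumes "\<And>a b. a \<in> D \<Longrightarrow> b \<in> D \<Longrightarrow> a < b \<Longrightarrow> g a = g b"
    and "(a, b) \<in> comparability_connected D"
  shows "g a = g b"
proof -
  have "(a, b) \<in> {(a, b). a \<in> D \<and> b \<in> D \<and> (a < b \<or> b < a)}\<^sup>*"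
    using assms(2) by (simp add: comparability_connected_def)
  then show ?thesis
    by (induction rule: rtrancl_induct) (auto dest: assms(1))
qed

definition comparability_components :: "('a::order) set \<Rightarrow> 'a set set" where
  "comparability_components D = D // comparability_connected D"

lemma comparability_components_nonempty: "S \<in> comparability_components D \<Longrightarrow> S \<noteq> {}"
  unfolding comparability_components_def
  by (rule in_quotient_imp_non_empty[OF equiv_comparability_connected])

lemma pairwise_disjnt_comparability_components: "pairwise disjnt (comparability_components D)"
  using quotient_disj[OF equiv_comparability_connected]
  by (auto simp: pairwise_def disjnt_def comparability_components_def)

lemma sum_scaleR_chi_component:
  fixes Q :: "('a::finite) set set"
  assumes "pairwise disjnt Q" "S \<in> Q" "i \<in> S"
  shows "(\<Sum>T\<in>Q. t T *\<^sub>R chi T) $ i = t S"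
proof -
  have "i \<notin> T" if "T \<in> Q" "T \<noteq> S" for T
    using assms that unfolding pairwise_def disjnt_def by blast
  then have "(\<Sum>T\<in>Q. t T *\<^sub>R chi T) $ i = (\<Sum>T\<in>Q. if T = S then t T else 0)"
    unfolding sum_component using assms(3) by (intro sum.cong refl) simp
  then show ?thesis using assms(2) by simp
qed

lemma sum_scaleR_chi_component_outside:
  fixes Q :: "('a::finite) set set"
  assumes "i \<notin> \<Union>Q"
  shows "(\<Sum>T\<in>Q. t T *\<^sub>R chi T) $ i = 0"
  using assms by (auto simp: sum_component intro: sum.neutral)

lemma cube_point_component:
  fixes I D :: "('a::{finite,order}) set"
  assumes "I \<inter> D = {}"
  shows "(chi I + (\<Sum>S\<in>comparability_components D. t S *\<^sub>R chi S)) $ i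
    = (if i \<in> I then 1 else if i \<in> D then t (comparability_connected D `` {i}) else 0)"
proof -
  let ?R = "comparability_connected D"
  have equiv: "equiv D ?R" by (rule equiv_comparability_connected)
  have "(\<Sum>S\<in>comparability_components D. t S *\<^sub>R chi S) $ i = t (?R `` {i})" if "i \<in> D"
  proof (rule sum_scaleR_chi_component)
    show "pairwise disjnt (comparability_components D)"
      by (rule pairwise_disjnt_comparability_components)
    show "?R `` {i} \<in> comparability_components D"
      using that by (simp add: comparability_components_def quotientI)
    show "i \<in> ?R `` {i}" using equiv_class_self[OF equiv that] .
  qed
  moreover have "(\<Sum>S\<in>comparability_components D. t S *\<^sub>R chi S) $ i = 0" if "i \<notin> D"
    using that Union_quotient[OF equiv]
    by (intro sum_scaleR_chi_component_outside) (simp add: comparability_components_def)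
  ultimately show ?thesis using assms by auto
qed

lemma cube_point_in_order_face:
  fixes I U :: "('a::{finite,order}) set"
  assumes fI: "order_filter I" and fU: "order_filter U" and IU: "I \<subseteq> U"
    and t: "\<forall>S\<in>comparability_components (U - I). 0 \<le> t S \<and> t S \<le> 1"
  shows "chi I + (\<Sum>S\<in>comparability_components (U - I). t S *\<^sub>R chi S) \<in> order_face I U"
proof -
  let ?R = "comparability_connected (U - I)"
  define x where "x = chi I + (\<Sum>S\<in>comparability_components (U - I). t S *\<^sub>R chi S)"
  have x: "x $ i = (if i \<in> I then 1 else if i \<in> U - I then t (?R `` {i}) else 0)" for i
    unfolding x_def by (rule cube_point_component) blast
  have bounds: "0 \<le> x $ i \<and> x $ i \<le> 1" for i
    using t x[of i] by (auto simp: comparability_components_def quotientI)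
  have same_class: "?R `` {a} = ?R `` {b}" if "a \<in> U - I" "b \<in> U - I" "a < b" for a b
  proof (rule equiv_class_eq[OF equiv_comparability_connected])
    show "(a, b) \<in> ?R" using that by (auto simp: comparability_connected_def intro: r_into_rtrancl)
  qed
  have "x $ a \<le> x $ b" if "a < b" for a b
  proof -
    have up: "a \<in> I \<Longrightarrow> b \<in> I" "a \<in> U \<Longrightarrow> b \<in> U"
      using fI fU \<open>a < b\<close> by (auto simp: order_filter_def)
    consider "a \<notin> U" | "b \<in> I" | "a \<in> U - I" "b \<in> U - I"
      using up by blast
    then show ?thesis
    proof cases
      case 1 then show ?thesis using x[of a] bounds[of b] IU by auto
    next
      case 2 then show ?thesis using x[of b] bounds[of a] by simp
    next
      case 3 then show ?thesis using x[of a] x[of b] same_class[OF 3 \<open>a < b\<close>] by simp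
    qed
  qed
  moreover have "x $ a = x $ b" if "a \<in> U - I" "b \<in> U - I" "a < b" for a b
    using x[of a] x[of b] same_class[OF that] that by simp
  ultimately show ?thesis
    using bounds x IU unfolding x_def[symmetric] by (auto simp: order_face_def order_polytope_def)
qed

lemma order_face_imp_cube_point:
  fixes I U :: "('a::{finite,order}) set"
  assumes x: "x \<in> order_face I U"
  shows "\<exists>t. (\<forall>S\<in>comparability_components (U - I). 0 \<le> t S \<and> t S \<le> 1) \<and>
    x = chi I + (\<Sum>S\<in>comparability_components (U - I). t S *\<^sub>R chi S)"
proof -
  let ?R = "comparability_connected (U - I)"
  have bounds: "0 \<le> x $ i \<and> x $ i \<le> 1" and on_I: "i \<in> I \<Longrightarrow> x $ i = 1"
    and off_U: "i \<notin> U \<Longrightarrow> x $ i = 0" for i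
    using x by (auto simp: order_face_def order_polytope_def)
  have const: "x $ a = x $ b" if "a \<in> U - I" "b \<in> U - I" "a < b" for a b
    using x that by (auto simp: order_face_def)
  define t where "t S = x $ (SOME a. a \<in> S)" for S
  have t_class: "t (?R `` {i}) = x $ i" if "i \<in> U - I" for i
  proof -
    have "(SOME a. a \<in> ?R `` {i}) \<in> ?R `` {i}"
      using equiv_class_self[OF equiv_comparability_connected that] by (rule someI)
    then have "(i, SOME a. a \<in> ?R `` {i}) \<in> ?R" by simp
    with const have "x $ i = x $ (SOME a. a \<in> ?R `` {i})"
      by (rule comparability_connected_imp_eq)
    then show ?thesis by (simp add: t_def)
  qed
  have "0 \<le> t S \<and> t S \<le> 1" if S: "S \<in> comparability_components (U - I)" for S
  proof -
    obtain i where "i \<in> U - I" "S = ?R `` {i}"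
      using S unfolding comparability_components_def by (rule quotientE)
    then show ?thesis using t_class bounds by simp
  qed
  moreover have "x = chi I + (\<Sum>S\<in>comparability_components (U - I). t S *\<^sub>R chi S)"
  proof -
    have "x $ i = (chi I + (\<Sum>S\<in>comparability_components (U - I). t S *\<^sub>R chi S)) $ i" for i
      using cube_point_component[of I "U - I" t i] on_I off_U t_class by auto
    then show ?thesis by (simp add: vec_eq_iff)
  qed
  ultimately show ?thesis by blast
qed

lemma order_face_eq_cube:
  fixes I U :: "('a::{finite,order}) set"
  assumes "order_filter I" "order_filter U" "I \<subseteq> U"
  shows "order_face I U = {x. \<exists>t. (\<forall>S\<in>comparability_components (U - I). 0 \<le> t S \<and> t S \<le> 1) \<and>
    x = chi I + (\<Sum>S\<in>comparability_components (U - I). t S *\<^sub>R chi S)}"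
proof (intro set_eqI iffI)
  show "x \<in> {x. \<exists>t. (\<forall>S\<in>comparability_components (U - I). 0 \<le> t S \<and> t S \<le> 1) \<and>
    x = chi I + (\<Sum>S\<in>comparability_components (U - I). t S *\<^sub>R chi S)}" if "x \<in> order_face I U" for x
    using order_face_imp_cube_point[OF that] by (simp only: mem_Collect_eq)
qed (use cube_point_in_order_face[OF assms] in blast)

lemma order_face_singleton:
  assumes "order_filter E"
  shows "order_face E E = {chi E}"
proof -
  have "x = chi E" if "x \<in> order_face E E" for x
  proof -
    have "\<forall>i\<in>E. x $ i = 1" "\<forall>i. i \<notin> E \<longrightarrow> x $ i = 0"
      using that by (simp_all add: order_face_def)
    then show ?thesis by (simp add: vec_eq_iff)
  qed
  moreover have "chi E \<in> order_face E E"
    using chi_in_order_face[OF assms assms] by simp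
  ultimately show ?thesis by blast
qed

lemma chi_extreme_point_of_order_polytope:
  assumes "order_filter E"
  shows "chi E extreme_point_of order_polytope"
  using order_face_face_of[of E E] by (simp add: order_face_singleton[OF assms] face_of_singleton)

lemma chi_in_order_face_imp_subset:
  assumes "chi A \<in> order_face I U"
  shows "I \<subseteq> A \<and> A \<subseteq> U"
proof -
  have "\<forall>i\<in>I. chi A $ i = 1" "\<forall>i. i \<notin> U \<longrightarrow> chi A $ i = 0"
    using assms by (simp_all add: order_face_def del: chi_component)
  then show ?thesis by (auto split: if_splits)
qed

lemma chi_add_eq_iff:
  "chi E + chi F = chi E' + chi F' \<longleftrightarrow> E \<inter> F = E' \<inter> F' \<and> E \<union> F = E' \<union> F'"
proof -
  have "(chi E + chi F) $ i = (chi E' + chi F') $ i \<longleftrightarrow>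
      (i \<in> E \<inter> F \<longleftrightarrow> i \<in> E' \<inter> F') \<and> (i \<in> E \<union> F \<longleftrightarrow> i \<in> E' \<union> F')" for i
    by simp
  then show ?thesis by (auto simp: vec_eq_iff set_eq_iff)
qed

lemma min_face_eq_iff:
  assumes "order_filter E" "order_filter F" "order_filter E'" "order_filter F'"
  shows "min_face E F = min_face E' F' \<longleftrightarrow> E \<inter> F = E' \<inter> F' \<and> E \<union> F = E' \<union> F'"
proof
  assume eq: "min_face E F = min_face E' F'"
  have "chi E \<in> order_face (E' \<inter> F') (E' \<union> F')" "chi F \<in> order_face (E' \<inter> F') (E' \<union> F')"
    "chi E' \<in> order_face (E \<inter> F) (E \<union> F)" "chi F' \<in> order_face (E \<inter> F) (E \<union> F)"
    using eq chi_in_order_face[OF assms(1,2)] chi_in_order_face[OF assms(2,1)]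
      chi_in_order_face[OF assms(3,4)] chi_in_order_face[OF assms(4,3)]
    by (simp_all add: min_face_eq_order_face assms Int_commute Un_commute)
  then show "E \<inter> F = E' \<inter> F' \<and> E \<union> F = E' \<union> F'"
    by (blast dest: chi_in_order_face_imp_subset)
qed (simp add: min_face_eq_order_face assms)

lemma opposite_vertices_min_face_iff:
  assumes fE: "order_filter E" and fF: "order_filter F" and fE': "order_filter E'" and fF': "order_filter F'"
  shows "opposite_vertices (min_face E F) (chi E') (chi F') \<longleftrightarrow> min_face E F = min_face E' F'"
proof -
  have face: "min_face A B face_of order_polytope" and chi_mem: "chi A \<in> min_face A B" "chi B \<in> min_face A B"
    if "order_filter A" "order_filter B" for A B
    using order_face_face_of chi_in_order_face[OF that] chi_in_order_face[OF that(2,1)]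
    by (simp_all add: min_face_eq_order_face that Int_commute Un_commute)
  have least: "min_face E' F' \<subseteq> T" if "T face_of order_polytope" "chi E' \<in> T" "chi F' \<in> T" for T
    unfolding min_face_def using that by blast
  let ?C = "min_face E F"
  show ?thesis
  proof
    assume opp: "opposite_vertices ?C (chi E') (chi F')"
    then have "chi E' \<in> ?C" "chi F' \<in> ?C" by (auto simp: opposite_vertices_def extreme_point_of_def)
    then have "min_face E' F' \<subseteq> ?C" using least face[OF fE fF] by blast
    then have "min_face E' F' face_of ?C"
      using face[OF fE' fF'] face[OF fE fF] face_of_subset face_of_imp_subset by blast
    then show "?C = min_face E' F'"
      using opp chi_mem[OF fE' fF'] unfolding opposite_vertices_def by metis
  next
    assume eq: "?C = min_face E' F'"
    have "chi A extreme_point_of ?C" if "order_filter A" "chi A \<in> ?C" for A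
      using chi_extreme_point_of_order_polytope[OF that(1)] that(2) face_of_imp_subset[OF face[OF fE fF]]
      by (auto simp: extreme_point_of_def)
    moreover have "\<not> (chi E' \<in> T \<and> chi F' \<in> T)" if "T face_of ?C" "T \<noteq> ?C" for T
      using that eq least[of T] face_of_trans[OF that(1) face[OF fE fF]] face_of_imp_subset[OF that(1)]
      by blast
    ultimately show "opposite_vertices ?C (chi E') (chi F')"
      unfolding opposite_vertices_def using eq chi_mem[OF fE' fF'] fE' fF' by auto
  qed
qed

theorem corollary3p2:
  fixes E F E' F' :: "('a::{finite,order}) set"
  assumes "order_filter E" "order_filter F" "order_filter E'" "order_filter F'"
  shows "(min_face E F = min_face E' F' \<longleftrightarrow> opposite_vertices (min_face E F) (chi E') (chi F'))
    \<and> (opposite_vertices (min_face E F) (chi E') (chi F') \<longleftrightarrow> chi E + chi F = chi E' + chi F')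
    \<and> (chi E + chi F = chi E' + chi F' \<longleftrightarrow> E \<inter> F = E' \<inter> F' \<and> E \<union> F = E' \<union> F')
    \<and> min_face E F = min_face (E \<inter> F) (E \<union> F)
    \<and> (\<exists>Q :: 'a set set. (\<forall>S\<in>Q. S \<noteq> {}) \<and> pairwise disjnt Q \<and>
         min_face E F = {x. \<exists>t. (\<forall>S\<in>Q. 0 \<le> t S \<and> t S \<le> 1) \<and>
                              x = chi (E \<inter> F) + (\<Sum>S\<in>Q. t S *\<^sub>R chi S)})"
proof -
  let ?Q = "comparability_components ((E \<union> F) - (E \<inter> F))"
  have filters: "order_filter (E \<inter> F)" "order_filter (E \<union> F)"
    using assms(1,2) by (rule order_filter_Int, rule order_filter_Un)
  have cube: "min_face E F = {x. \<exists>t. (\<forall>S\<in>?Q. 0 \<le> t S \<and> t S \<le> 1) \<and>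
      x = chi (E \<inter> F) + (\<Sum>S\<in>?Q. t S *\<^sub>R chi S)}"
    unfolding min_face_eq_order_face[OF assms(1,2)] by (rule order_face_eq_cube[OF filters]) blast
  show ?thesis
  proof (intro conjI)
    show "min_face E F = min_face E' F' \<longleftrightarrow> opposite_vertices (min_face E F) (chi E') (chi F')"
      using opposite_vertices_min_face_iff[OF assms] by (rule sym)
    show "opposite_vertices (min_face E F) (chi E') (chi F') \<longleftrightarrow> chi E + chi F = chi E' + chi F'"
      unfolding opposite_vertices_min_face_iff[OF assms] min_face_eq_iff[OF assms] chi_add_eq_iff ..
    show "chi E + chi F = chi E' + chi F' \<longleftrightarrow> E \<inter> F = E' \<inter> F' \<and> E \<union> F = E' \<union> F'"
      by (rule chi_add_eq_iff)
    show "min_face E F = min_face (E \<inter> F) (E \<union> F)"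
      unfolding min_face_eq_iff[OF assms(1,2) filters] by blast
    show "\<exists>Q :: 'a set set. (\<forall>S\<in>Q. S \<noteq> {}) \<and> pairwise disjnt Q \<and>
        min_face E F = {x. \<exists>t. (\<forall>S\<in>Q. 0 \<le> t S \<and> t S \<le> 1) \<and>
                             x = chi (E \<inter> F) + (\<Sum>S\<in>Q. t S *\<^sub>R chi S)}"
      using comparability_components_nonempty pairwise_disjnt_comparability_components cube
      by (intro exI[of _ ?Q] conjI ballI)
  qed
qed

end
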